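(* Let $\mathrm{CNF}$, $\mathrm{cps}$ and the translations ($V^{\sim}$, $M^{\wr}$, $M^{-}$) and ($P^{+}$, $M^{\times}$, $V^{\times\times}$) be as in the context. Then $\mathrm{CNF}\cong\mathrm{cps}$, namely: (1) for all terms $M$ and values $V$ of $\mathrm{CNF}$, $(M^{-})^{+}=M$, $(M^{\wr})^{\times}=M$ and $(V^{\sim})^{\times\times}=V$; (2) for all terms $P$, commands $M$ and values $V$ of $\mathrm{cps}$, $(P^{+})^{-}=P$, $(M^{\times})^{\wr}=M$ and $(V^{\times\times})^{\sim}=V$; (3) if $M_1\to M_2$ in $\mathrm{CNF}$ then $M_1^{\wr}\to M_2^{\wr}$ in $\mathrm{cps}$ (hence $M_1^{-}\to M_2^{-}$ in $\mathrm{cps}$); (4) if $M_1\to M_2$ for commands in $\mathrm{cps}$ then $M_1^{\times}\to M_2^{\times}$ in $\mathrm{CNF}$; hence if $P_1\to P_2$ for terms in $\mathrm{cps}$ then $P_1^{+}\to P_2^{+}$ in $\mathrm{CNF}$.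
   Context: Terms are considered up to $\alpha$-conversion; $[V/x]$ is capture-avoiding substitution; $\to$ is one-step reduction (closure of the listed rule under all constructors). $\mathrm{CNF}$: terms $M::=V\mid V(W,x.M)$ ($x$ bound in $M$), values $V,W::=x\mid\lambda x.M$. Left substitution: $\langle V\backslash x\rangle P=[V/x]P$, $\langle V(W,y.N)\backslash x\rangle P=V(W,y.\langle N\backslash x\rangle P)$. Rule: $(\beta_v)$ $(\lambda y.M)(W,x.P)\to\langle [W/y]M\backslash x\rangle P$. $\mathrm{cps}$ (with a fixed distinguished covariable $k$): commands $M,N::=kV\mid VW(\lambda x.N)$; values $V,W::=x\mid\lambda x.P$; terms $P::=\lambda k.M$ (application associates to the left). The substitution $[\lambda x.N/k]M$ is defined homomorphically except for the clause $[\lambda x.N/k](kV)=[V/x]N$. Rule: $(\beta_v)$ $(\lambda y.\lambda k.M)W(\lambda x.N)\to[\lambda x.N/k][W/y]M$. Translation from $\mathrm{CNF}$ to $\mathrm{cps}$: $x^{\sim}=x$; $(\lambda x.M)^{\sim}=\lambda x.M^{-}$; $M^{-}=\lambda k.M^{\wr}$; $V^{\wr}=kV^{\sim}$; $(V(W,x.M))^{\wr}=V^{\sim}W^{\sim}(\lambda x.M^{\wr})$. Inverse: $x^{\times\times}=x$; $(\lambda x.P)^{\times\times}=\lambda x.P^{+}$; $(\lambda k.M)^{+}=M^{\times}$; $(kV)^{\times}=V^{\times\times}$; $(VW(\lambda x.M))^{\times}=V^{\times\times}(W^{\times\times},x.M^{\times})$. *)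

theory Defs
  imports Main
begin

text \<open>Terms up to alpha-conversion are represented with de Bruijn indices
(binders: \<lambda>x.M in values, and the x in V(W,x.M) / V W (\<lambda>x.N)).
The distinguished covariable k of cps is not a term variable; \<lambda>k.M is
the constructor KLam.\<close>

datatype cterm = CVal cval | CApp cval cval cterm
     and cval = CVar nat | CLam cterm

primrec lift_c :: "nat \<Rightarrow> cterm \<Rightarrow> cterm"
  and lift_cv :: "nat \<Rightarrow> cval \<Rightarrow> cval" where
  "lift_c k (CVal V) = CVal (lift_cv k V)"
| "lift_c k (CApp V W M) = CApp (lift_cv k V) (lift_cv k W) (lift_c (Suc k) M)"
| "lift_cv k (CVar i) = CVar (if i < k then i else Suc i)"
| "lift_cv k (CLam M) = CLam (lift_c (Suc k) M)"

primrec subst_c :: "cterm \<Rightarrow> nat \<Rightarrow> cval \<Rightarrow> cterm"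
  and subst_cv :: "cval \<Rightarrow> nat \<Rightarrow> cval \<Rightarrow> cval" where
  "subst_c (CVal V) k U = CVal (subst_cv V k U)"
| "subst_c (CApp V W M) k U =
     CApp (subst_cv V k U) (subst_cv W k U) (subst_c M (Suc k) (lift_cv 0 U))"
| "subst_cv (CVar i) k U = (if i < k then CVar i else if i = k then U else CVar (i - 1))"
| "subst_cv (CLam M) k U = CLam (subst_c M (Suc k) (lift_cv 0 U))"

text \<open>Left substitution \<langle>N\x\<rangle>P, where x is the bound index 0 of P.\<close>
primrec lsubst :: "cterm \<Rightarrow> cterm \<Rightarrow> cterm" where
  "lsubst (CVal V) P = subst_c P 0 V"
| "lsubst (CApp V W N) P = CApp V W (lsubst N (lift_c 1 P))"

inductive cstep :: "cterm \<Rightarrow> cterm \<Rightarrow> bool"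
  and cvstep :: "cval \<Rightarrow> cval \<Rightarrow> bool" where
  c_beta: "cstep (CApp (CLam M) W P) (lsubst (subst_c M 0 W) P)"
| c_val: "cvstep V V' \<Longrightarrow> cstep (CVal V) (CVal V')"
| c_app1: "cvstep V V' \<Longrightarrow> cstep (CApp V W M) (CApp V' W M)"
| c_app2: "cvstep W W' \<Longrightarrow> cstep (CApp V W M) (CApp V W' M)"
| c_app3: "cstep M M' \<Longrightarrow> cstep (CApp V W M) (CApp V W M')"
| c_lam: "cstep M M' \<Longrightarrow> cvstep (CLam M) (CLam M')"

datatype pcmd = KRet pval | PApp pval pval pcmd
     and pval = PVar nat | PLam pterm
     and pterm = KLam pcmd

primrec lift_pc :: "nat \<Rightarrow> pcmd \<Rightarrow> pcmd"
  and lift_pv :: "nat \<Rightarrow> pval \<Rightarrow> pval"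
  and lift_pt :: "nat \<Rightarrow> pterm \<Rightarrow> pterm" where
  "lift_pc k (KRet V) = KRet (lift_pv k V)"
| "lift_pc k (PApp V W M) = PApp (lift_pv k V) (lift_pv k W) (lift_pc (Suc k) M)"
| "lift_pv k (PVar i) = PVar (if i < k then i else Suc i)"
| "lift_pv k (PLam P) = PLam (lift_pt (Suc k) P)"
| "lift_pt k (KLam M) = KLam (lift_pc k M)"

primrec subst_pc :: "pcmd \<Rightarrow> nat \<Rightarrow> pval \<Rightarrow> pcmd"
  and subst_pv :: "pval \<Rightarrow> nat \<Rightarrow> pval \<Rightarrow> pval"
  and subst_pt :: "pterm \<Rightarrow> nat \<Rightarrow> pval \<Rightarrow> pterm" where
  "subst_pc (KRet V) k U = KRet (subst_pv V k U)"
| "subst_pc (PApp V W M) k U =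
     PApp (subst_pv V k U) (subst_pv W k U) (subst_pc M (Suc k) (lift_pv 0 U))"
| "subst_pv (PVar i) k U = (if i < k then PVar i else if i = k then U else PVar (i - 1))"
| "subst_pv (PLam P) k U = PLam (subst_pt P (Suc k) (lift_pv 0 U))"
| "subst_pt (KLam M) k U = KLam (subst_pc M k U)"

text \<open>ksubst N M = [\<lambda>x.N/k]M, x being the bound index 0 of N. It is homomorphic
on the command spine; values contain no free k (every k there is bound by an
inner \<lambda>k), so they are left untouched.\<close>
primrec ksubst :: "pcmd \<Rightarrow> pcmd \<Rightarrow> pcmd" where
  "ksubst N (KRet V) = subst_pc N 0 V"
| "ksubst N (PApp V W M) = PApp V W (ksubst (lift_pc 1 N) M)"

inductive pstep :: "pcmd \<Rightarrow> pcmd \<Rightarrow> bool"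
  and pvstep :: "pval \<Rightarrow> pval \<Rightarrow> bool"
  and ptstep :: "pterm \<Rightarrow> pterm \<Rightarrow> bool" where
  p_beta: "pstep (PApp (PLam (KLam M)) W N) (ksubst N (subst_pc M 0 W))"
| p_ret: "pvstep V V' \<Longrightarrow> pstep (KRet V) (KRet V')"
| p_app1: "pvstep V V' \<Longrightarrow> pstep (PApp V W M) (PApp V' W M)"
| p_app2: "pvstep W W' \<Longrightarrow> pstep (PApp V W M) (PApp V W' M)"
| p_app3: "pstep M M' \<Longrightarrow> pstep (PApp V W M) (PApp V W M')"
| p_lam: "ptstep P P' \<Longrightarrow> pvstep (PLam P) (PLam P')"
| p_klam: "pstep M M' \<Longrightarrow> ptstep (KLam M) (KLam M')"

primrec tr_wr :: "cterm \<Rightarrow> pcmd"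
  and tr_tilde :: "cval \<Rightarrow> pval" where
  "tr_wr (CVal V) = KRet (tr_tilde V)"
| "tr_wr (CApp V W M) = PApp (tr_tilde V) (tr_tilde W) (tr_wr M)"
| "tr_tilde (CVar x) = PVar x"
| "tr_tilde (CLam M) = PLam (KLam (tr_wr M))"

definition tr_minus :: "cterm \<Rightarrow> pterm" where
  "tr_minus M = KLam (tr_wr M)"

primrec tr_times :: "pcmd \<Rightarrow> cterm"
  and tr_tt :: "pval \<Rightarrow> cval"
  and tr_plus :: "pterm \<Rightarrow> cterm" where
  "tr_times (KRet V) = CVal (tr_tt V)"
| "tr_times (PApp V W M) = CApp (tr_tt V) (tr_tt W) (tr_times M)"
| "tr_tt (PVar x) = CVar x"
| "tr_tt (PLam P) = CLam (tr_plus P)"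
| "tr_plus (KLam M) = tr_times M"

end

theory Submission
  imports Defs
begin

text \<open>The two grammars are the same up to the explicit continuation k, so the
translations are mutually inverse by structural induction. For the reductions
the point is that the translation commutes with lifting and substitution and
turns left substitution into substitution for k; hence a beta_v-redex is sent to
a beta_v-redex with the translated contractum. The converse direction transfers
these equations along the bijection.\<close>

lemma tr_wr_lift:
  "tr_wr (lift_c k M) = lift_pc k (tr_wr M)"
  "tr_tilde (lift_cv k V) = lift_pv k (tr_tilde V)"
  by (induction M and V arbitrary: k and k) auto

lemma tr_wr_subst:
  "tr_wr (subst_c M k U) = subst_pc (tr_wr M) k (tr_tilde U)"
  "tr_tilde (subst_cv V k U) = subst_pv (tr_tilde V) k (tr_tilde U)"
  by (induction M and V arbitrary: k U and k U) (auto simp: tr_wr_lift)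

lemma tr_wr_lsubst: "tr_wr (lsubst N P) = ksubst (tr_wr P) (tr_wr N)"
  by (induction N arbitrary: P) (auto simp: tr_wr_subst tr_wr_lift)

lemma tr_times_tr_wr [simp]:
  "tr_times (tr_wr M) = M"
  "tr_tt (tr_tilde V) = V"
  by (induction M and V) auto

lemma tr_plus_tr_minus [simp]: "tr_plus (tr_minus M) = M"
  by (simp add: tr_minus_def)

lemma tr_wr_tr_times [simp]:
  "tr_wr (tr_times M) = M"
  "tr_tilde (tr_tt V) = V"
  "tr_minus (tr_plus P) = P"
  by (induction M and V and P) (auto simp: tr_minus_def)

lemma tr_times_subst_pc: "tr_times (subst_pc M k U) = subst_c (tr_times M) k (tr_tt U)"
proof -
  have "subst_pc M k U = tr_wr (subst_c (tr_times M) k (tr_tt U))"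
    by (simp add: tr_wr_subst)
  then show ?thesis by simp
qed

lemma tr_times_ksubst: "tr_times (ksubst N M) = lsubst (tr_times M) (tr_times N)"
proof -
  have "ksubst N M = tr_wr (lsubst (tr_times M) (tr_times N))"
    by (simp add: tr_wr_lsubst)
  then show ?thesis by simp
qed

lemma tr_wr_cstep:
  "cstep M1 M2 \<Longrightarrow> pstep (tr_wr M1) (tr_wr M2)"
  "cvstep V1 V2 \<Longrightarrow> pvstep (tr_tilde V1) (tr_tilde V2)"
proof (induction rule: cstep_cvstep.inducts)
  case (c_beta M W P)
  show ?case
    using p_beta[of "tr_wr M" "tr_tilde W" "tr_wr P"] by (simp add: tr_wr_lsubst tr_wr_subst)
qed (auto intro: pstep_pvstep_ptstep.intros)

lemma tr_minus_cstep: "cstep M1 M2 \<Longrightarrow> ptstep (tr_minus M1) (tr_minus M2)"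
  by (simp add: tr_minus_def p_klam tr_wr_cstep)

lemma tr_times_pstep:
  "pstep M1 M2 \<Longrightarrow> cstep (tr_times M1) (tr_times M2)"
  "pvstep V1 V2 \<Longrightarrow> cvstep (tr_tt V1) (tr_tt V2)"
  "ptstep P1 P2 \<Longrightarrow> cstep (tr_plus P1) (tr_plus P2)"
proof (induction rule: pstep_pvstep_ptstep.inducts)
  case (p_beta M W N)
  show ?case
    using c_beta[of "tr_times M" "tr_tt W" "tr_times N"]
    by (simp add: tr_times_ksubst tr_times_subst_pc)
qed (auto intro: cstep_cvstep.intros)

theorem theorem5:
  shows "((\<forall>M. tr_plus (tr_minus M) = M) \<and> (\<forall>M. tr_times (tr_wr M) = M)
           \<and> (\<forall>V. tr_tt (tr_tilde V) = V))
    \<and> ((\<forall>P. tr_minus (tr_plus P) = P) \<and> (\<forall>M. tr_wr (tr_times M) = M)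
           \<and> (\<forall>V. tr_tilde (tr_tt V) = V))
    \<and> (\<forall>M1 M2. cstep M1 M2 \<longrightarrow>
           pstep (tr_wr M1) (tr_wr M2) \<and> ptstep (tr_minus M1) (tr_minus M2))
    \<and> ((\<forall>M1 M2. pstep M1 M2 \<longrightarrow> cstep (tr_times M1) (tr_times M2))
           \<and> (\<forall>P1 P2. ptstep P1 P2 \<longrightarrow> cstep (tr_plus P1) (tr_plus P2)))"
  by (simp add: tr_wr_cstep tr_minus_cstep tr_times_pstep)

end
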